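(* Let $q_1=\dfrac{\rho\varepsilon}{1-\rho(1-\varepsilon)}$ and $q_2=(1-\varepsilon)^{I-1}$, and let $\bar\varepsilon\in(0,1)$ be the unique value of $\varepsilon$ at which $q_1=q_2$. If $0<\varepsilon<\bar\varepsilon$ then for every information tree $\mathcal T$ and every $p$: $C^p_{\mathcal T}(G)=\Omega$ if $p\le q_1$; $C^p_{\mathcal T}(G)=Y^*$ if $q_1<p\le q_2$; $C^p_{\mathcal T}(G)=\varnothing$ if $p>q_2$.
   Context: Model. Fix an integer $I\ge2$, agents $\mathcal I=\{1,\dots,I\}$, a prior $\rho\in(0,1)$ and a loss probability $\varepsilon\in(0,1)$. A state of nature $\theta\in\{g,b\}$ has $\Pr(\theta=g)=\rho$. A forest $F$ on $\mathcal I$ is a collection of vertex-disjoint undirected trees $T^1,\dots,T^R$ whose vertex sets partition $\mathcal I$; a seeding $s=(s^1,\dots,s^R)$ chooses exactly one vertex $s^r$ of each $T^r$. The pair $\mathcal T=(F,s)$ is an information tree: orient each $T^r$ away from $s^r$ and add a root $0$ (the planner) with an arc $0\to s^r$ for each $r$. If $\theta=b$ no messages are sent. If $\theta=g$ the planner sends a message along each arc $0\to s^r$, and every agent who receives a message forwards it along every arc leaving her. Each transmission along an arc is lost independently with probability $\varepsilon$. Agent $i$ observes only $x_i\in\{y,n\}$ (received / not). $\Omega=\{g,b\}\times\{y,n\}^I$, $\mathbb P_{\mathcal T}$ the induced probability. $G=\{\theta=g\}$, $Y_i=\{x_i=y\}$, $N_i=\Omega\setminus Y_i$, $Y^*=\bigcap_iY_i$.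 $B^p_i(E)=\{\omega:\mathbb P_{\mathcal T}[E\mid x_i=x_i(\omega)]\ge p\}$, $B^p(E)=\bigcap_iB^p_i(E)$, $B^{p,0}(E)=E$, $B^{p,\ell}(E)=B^p(B^{p,\ell-1}(E))$, $C^p_{\mathcal T}(E)=\bigcap_{\ell\ge1}B^{p,\ell}(E)$. For any seed $1$, $\mathbb P_{\mathcal T}[G\mid N_1]=q_1$ and $\mathbb P_{\mathcal T}[Y^*\mid Y_1]=q_2$; $q_1$ is increasing and $q_2$ decreasing in $\varepsilon$. *)

theory Defs
  imports Complex_Main
begin

text \<open>Agents are 1..I, the planner is 0. An information tree (forest + seeding, oriented
away from the seeds, with root 0 attached to every seed) is encoded by its parent map:
par i is the tail of the unique arc entering agent i (par i = 0 iff i is a seed).\<close>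

definition is_info_tree :: "nat \<Rightarrow> (nat \<Rightarrow> nat) \<Rightarrow> bool" where
  "is_info_tree I par \<longleftrightarrow> par 0 = 0 \<and>
     (\<forall>i\<in>{1..I}. par i \<in> {0..I} \<and> (\<exists>n. (par ^^ n) i = 0))"

text \<open>States: (theta, x) with theta = True meaning g, x i = True meaning x_i = y.\<close>
definition Omega :: "nat \<Rightarrow> (bool \<times> (nat \<Rightarrow> bool)) set" where
  "Omega I = {(th, x). \<forall>i. i \<notin> {1..I} \<longrightarrow> \<not> x i}"

text \<open>Arc outcomes: a i = True iff the transmission along the arc entering i succeeds.\<close>
definition arcs :: "nat \<Rightarrow> (nat \<Rightarrow> bool) set" where
  "arcs I = {a. \<forall>i. i \<notin> {1..I} \<longrightarrow> \<not> a i}"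

definition arc_weight :: "nat \<Rightarrow> real \<Rightarrow> (nat \<Rightarrow> bool) \<Rightarrow> real" where
  "arc_weight I \<epsilon> a = (\<Prod>i\<in>{1..I}. if a i then 1 - \<epsilon> else \<epsilon>)"

definition recv :: "nat \<Rightarrow> (nat \<Rightarrow> nat) \<Rightarrow> (nat \<Rightarrow> bool) \<Rightarrow> nat \<Rightarrow> bool" where
  "recv I par a i \<longleftrightarrow> i \<in> {1..I} \<and> (\<forall>n. (par ^^ n) i \<noteq> 0 \<longrightarrow> a ((par ^^ n) i))"

definition Pr :: "nat \<Rightarrow> (nat \<Rightarrow> nat) \<Rightarrow> real \<Rightarrow> real \<Rightarrow> (bool \<times> (nat \<Rightarrow> bool)) set \<Rightarrow> real" where
  "Pr I par \<rho> \<epsilon> E =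
     \<rho> * (\<Sum>a\<in>arcs I. arc_weight I \<epsilon> a * (if (True, recv I par a) \<in> E then 1 else 0))
     + (1 - \<rho>) * (if (False, (\<lambda>_. False)) \<in> E then 1 else 0)"

definition cond_Pr :: "nat \<Rightarrow> (nat \<Rightarrow> nat) \<Rightarrow> real \<Rightarrow> real \<Rightarrow>
    (bool \<times> (nat \<Rightarrow> bool)) set \<Rightarrow> (bool \<times> (nat \<Rightarrow> bool)) set \<Rightarrow> real" where
  "cond_Pr I par \<rho> \<epsilon> E F = Pr I par \<rho> \<epsilon> (E \<inter> F) / Pr I par \<rho> \<epsilon> F"

definition info_cell :: "nat \<Rightarrow> nat \<Rightarrow> bool \<times> (nat \<Rightarrow> bool) \<Rightarrow> (bool \<times> (nat \<Rightarrow> bool)) set" where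
  "info_cell I i \<omega> = {\<omega>'\<in>Omega I. snd \<omega>' i = snd \<omega> i}"

definition belief_i :: "nat \<Rightarrow> (nat \<Rightarrow> nat) \<Rightarrow> real \<Rightarrow> real \<Rightarrow> real \<Rightarrow> nat \<Rightarrow>
    (bool \<times> (nat \<Rightarrow> bool)) set \<Rightarrow> (bool \<times> (nat \<Rightarrow> bool)) set" where
  "belief_i I par \<rho> \<epsilon> p i E = {\<omega>\<in>Omega I. cond_Pr I par \<rho> \<epsilon> E (info_cell I i \<omega>) \<ge> p}"

definition belief :: "nat \<Rightarrow> (nat \<Rightarrow> nat) \<Rightarrow> real \<Rightarrow> real \<Rightarrow> real \<Rightarrow>
    (bool \<times> (nat \<Rightarrow> bool)) set \<Rightarrow> (bool \<times> (nat \<Rightarrow> bool)) set" where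
  "belief I par \<rho> \<epsilon> p E = Omega I \<inter> (\<Inter>i\<in>{1..I}. belief_i I par \<rho> \<epsilon> p i E)"

definition common_belief :: "nat \<Rightarrow> (nat \<Rightarrow> nat) \<Rightarrow> real \<Rightarrow> real \<Rightarrow> real \<Rightarrow>
    (bool \<times> (nat \<Rightarrow> bool)) set \<Rightarrow> (bool \<times> (nat \<Rightarrow> bool)) set" where
  "common_belief I par \<rho> \<epsilon> p E = (\<Inter>l\<in>{1..}. (belief I par \<rho> \<epsilon> p ^^ l) E)"

definition Gev :: "nat \<Rightarrow> (bool \<times> (nat \<Rightarrow> bool)) set" where
  "Gev I = {\<omega>\<in>Omega I. fst \<omega>}"

definition Ystar :: "nat \<Rightarrow> (bool \<times> (nat \<Rightarrow> bool)) set" where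
  "Ystar I = {\<omega>\<in>Omega I. \<forall>i\<in>{1..I}. snd \<omega> i}"

definition q1 :: "real \<Rightarrow> real \<Rightarrow> real" where
  "q1 \<rho> \<epsilon> = \<rho> * \<epsilon> / (1 - \<rho> * (1 - \<epsilon>))"

definition q2 :: "nat \<Rightarrow> real \<Rightarrow> real" where
  "q2 I \<epsilon> = (1 - \<epsilon>) ^ (I - 1)"

end

theory Submission
  imports Defs
begin

text \<open>Given \<open>\<theta> = g\<close>, agent \<open>j\<close> receives the message iff every arc on its path from the planner
succeeds; these arcs are independent, so with \<open>r\<^sub>j\<close> the probability of reception,
\<open>r\<^sub>j = (1 - \<epsilon>) r\<^bsub>par j\<^esub>\<close> and \<open>r\<^sub>j = 1 - \<epsilon>\<close> for a seed. An uninformed agent \<open>j\<close> assigns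
probability \<open>\<rho>(1 - r\<^sub>j)/(1 - \<rho> r\<^sub>j) \<ge> q\<^sub>1\<close> to \<open>G\<close>, so for \<open>p \<le> q\<^sub>1\<close> every state believes \<open>G\<close>
and \<open>\<Omega>\<close> is common \<open>p\<close>-belief. For \<open>p > q\<^sub>1\<close> an uninformed seed does not believe \<open>G\<close>, and an
uninformed agent whose parent is known to be informed assigns it probability at most \<open>q\<^sub>1\<close>;
by induction on the depth, after as many iterations as the tree is deep the iterated
\<open>p\<close>-belief lies inside \<open>Y\<^sup>*\<close>. On \<open>Y\<^sup>*\<close> an informed agent \<open>j\<close> assigns \<open>Y\<^sup>*\<close> probability
\<open>(1 - \<epsilon>)\<^sup>I / r\<^sub>j \<ge> q\<^sub>2\<close>, with equality at a seed. Hence \<open>Y\<^sup>*\<close> is \<open>p\<close>-evident exactly when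
\<open>p \<le> q\<^sub>2\<close>, and above \<open>q\<^sub>2\<close> nothing is believed at all. The hypothesis \<open>\<epsilon> < \<bar>\<epsilon>\<close> only serves to
make \<open>q\<^sub>1 < q\<^sub>2\<close>.\<close>

section \<open>The distribution of arc outcomes\<close>

definition arcs_prob :: "nat \<Rightarrow> real \<Rightarrow> (nat \<Rightarrow> bool) set \<Rightarrow> real" where
  "arcs_prob I \<epsilon> A = (\<Sum>a\<in>arcs I \<inter> A. arc_weight I \<epsilon> a)"

definition no_loss :: "nat \<Rightarrow> nat \<Rightarrow> bool" where
  "no_loss I i \<longleftrightarrow> i \<in> {1..I}"

lemma arcs_eq_image_Pow: "arcs I = (\<lambda>X i. i \<in> X) ` Pow {1..I}"
proof
  show "arcs I \<subseteq> (\<lambda>X i. i \<in> X) ` Pow {1..I}"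
  proof
    fix a assume "a \<in> arcs I"
    hence "a = (\<lambda>i. i \<in> {i. a i})" "{i. a i} \<in> Pow {1..I}" by (auto simp: arcs_def)
    thus "a \<in> (\<lambda>X i. i \<in> X) ` Pow {1..I}" by blast
  qed
qed (auto simp: arcs_def)

lemma finite_arcs: "finite (arcs I)"
  by (simp add: arcs_eq_image_Pow)

lemma no_loss_in_arcs: "no_loss I \<in> arcs I"
  by (simp add: no_loss_def arcs_def)

locale lossy_arcs =
  fixes I :: nat and \<epsilon> :: real
  assumes loss_pos: "0 < \<epsilon>" and loss_lt_1: "\<epsilon> < 1"
begin

lemma arc_weight_nonneg: "arc_weight I \<epsilon> a \<ge> 0"
  unfolding arc_weight_def using loss_pos loss_lt_1 by (intro prod_nonneg) auto

lemma arc_weight_no_loss: "arc_weight I \<epsilon> (no_loss I) = (1 - \<epsilon>) ^ I"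
  by (simp add: no_loss_def arc_weight_def)

lemma arcs_prob_nonneg: "arcs_prob I \<epsilon> A \<ge> 0"
  unfolding arcs_prob_def by (intro sum_nonneg arc_weight_nonneg)

lemma arcs_prob_mono: "A \<subseteq> B \<Longrightarrow> arcs_prob I \<epsilon> A \<le> arcs_prob I \<epsilon> B"
  unfolding arcs_prob_def by (intro sum_mono2) (auto simp: finite_arcs arc_weight_nonneg)

lemma arcs_prob_split: "arcs_prob I \<epsilon> A = arcs_prob I \<epsilon> (A \<inter> B) + arcs_prob I \<epsilon> (A - B)"
proof -
  have "arcs I \<inter> A = (arcs I \<inter> (A \<inter> B)) \<union> (arcs I \<inter> (A - B))" by blast
  thus ?thesis
    unfolding arcs_prob_def by (simp add: finite_arcs sum.union_disjoint disjoint_iff)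
qed

lemma arcs_prob_UNIV: "arcs_prob I \<epsilon> UNIV = 1"
proof -
  have "arcs_prob I \<epsilon> UNIV = (\<Sum>X\<in>Pow {1..I}. arc_weight I \<epsilon> (\<lambda>i. i \<in> X))"
    unfolding arcs_prob_def arcs_eq_image_Pow Int_UNIV_right
    by (subst sum.reindex) (auto intro: inj_onI simp: fun_eq_iff)
  also have "\<dots> = (\<Sum>X\<in>Pow {1..I}. (\<Prod>i\<in>X. 1 - \<epsilon>) * (\<Prod>i\<in>{1..I} - X. \<epsilon>))"
  proof (rule sum.cong)
    fix X assume "X \<in> Pow {1..I}"
    hence "{1..I} \<inter> {i. i \<in> X} = X" "{1..I} \<inter> - {i. i \<in> X} = {1..I} - X" by auto
    thus "arc_weight I \<epsilon> (\<lambda>i. i \<in> X) = (\<Prod>i\<in>X. 1 - \<epsilon>) * (\<Prod>i\<in>{1..I} - X. \<epsilon>)"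
      unfolding arc_weight_def by (subst prod.If_cases) simp_all
  qed simp
  also have "\<dots> = (\<Prod>i\<in>{1..I}. (1 - \<epsilon>) + \<epsilon>)"
    by (rule prod_add[symmetric]) simp
  finally show ?thesis by simp
qed

lemma arcs_prob_Compl: "arcs_prob I \<epsilon> (- A) = 1 - arcs_prob I \<epsilon> A"
  using arcs_prob_split[of UNIV A] arcs_prob_UNIV by (simp add: Compl_eq_Diff_UNIV)

text \<open>The arc entering \<open>j\<close> is independent of every event not depending on it; flipping it is a
bijection between the two halves of the event that rescales weights by \<open>\<epsilon> / (1 - \<epsilon>)\<close>.\<close>

lemma arcs_prob_indep_arc:
  assumes j: "j \<in> {1..I}" and A: "\<And>a b. a(j := b) \<in> A \<longleftrightarrow> a \<in> A"
  shows "arcs_prob I \<epsilon> (A \<inter> {a. a j}) = (1 - \<epsilon>) * arcs_prob I \<epsilon> A"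
proof -
  let ?f = "\<lambda>b. if b then 1 - \<epsilon> else \<epsilon>"
  have weight_split: "arc_weight I \<epsilon> a = ?f (a j) * (\<Prod>i\<in>{1..I} - {j}. ?f (a i))" for a
    unfolding arc_weight_def using j by (simp add: prod.remove)
  have flip: "\<epsilon> * arc_weight I \<epsilon> a = (1 - \<epsilon>) * arc_weight I \<epsilon> (a(j := False))" if "a j" for a
  proof -
    have "(\<Prod>i\<in>{1..I} - {j}. ?f ((a(j := False)) i)) = (\<Prod>i\<in>{1..I} - {j}. ?f (a i))"
      by (rule prod.cong) auto
    thus ?thesis using weight_split[of a] weight_split[of "a(j := False)"] that by simp
  qed
  have "\<epsilon> * arcs_prob I \<epsilon> (A \<inter> {a. a j})
      = (\<Sum>a\<in>arcs I \<inter> (A \<inter> {a. a j}). (1 - \<epsilon>) * arc_weight I \<epsilon> (a(j := False)))"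
    unfolding arcs_prob_def sum_distrib_left by (rule sum.cong) (auto simp: flip)
  also have "\<dots> = (\<Sum>a\<in>arcs I \<inter> (A - {a. a j}). (1 - \<epsilon>) * arc_weight I \<epsilon> a)"
    by (rule sum.reindex_bij_witness[where i = "\<lambda>a. a(j := True)" and j = "\<lambda>a. a(j := False)"])
       (use j A in \<open>auto simp: arcs_def fun_eq_iff\<close>)
  also have "\<dots> = (1 - \<epsilon>) * arcs_prob I \<epsilon> (A - {a. a j})"
    unfolding arcs_prob_def sum_distrib_left ..
  finally show ?thesis
    using arcs_prob_split[of A "{a. a j}"] by (simp add: algebra_simps)
qed

lemma arcs_prob_arc: "j \<in> {1..I} \<Longrightarrow> arcs_prob I \<epsilon> {a. a j} = 1 - \<epsilon>"
  using arcs_prob_indep_arc[of j UNIV] arcs_prob_UNIV by simp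

lemma arcs_prob_subset_no_loss:
  assumes "arcs I \<inter> A = {no_loss I}"
  shows "arcs_prob I \<epsilon> A = (1 - \<epsilon>) ^ I"
  unfolding arcs_prob_def assms by (simp add: arc_weight_no_loss)

lemma arcs_prob_no_loss_le: "no_loss I \<in> A \<Longrightarrow> (1 - \<epsilon>) ^ I \<le> arcs_prob I \<epsilon> A"
  unfolding arcs_prob_def arc_weight_no_loss[symmetric]
  by (rule member_le_sum) (auto simp: no_loss_in_arcs arc_weight_nonneg finite_arcs)

end

section \<open>Information trees\<close>

locale info_tree =
  fixes I :: nat and par :: "nat \<Rightarrow> nat"
  assumes info_tree: "is_info_tree I par"
begin

lemma par_0: "par 0 = 0"
  using info_tree by (simp add: is_info_tree_def)

lemma par_agent: "j \<in> {1..I} \<Longrightarrow> par j \<in> {0..I}"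
  using info_tree by (simp add: is_info_tree_def)

lemma reaches_planner: "j \<in> {1..I} \<Longrightarrow> \<exists>n. (par ^^ n) j = 0"
  using info_tree by (simp add: is_info_tree_def)

lemma funpow_par_0: "(par ^^ n) 0 = 0"
  by (induction n) (simp_all add: par_0)

lemma funpow_par_Suc: "(par ^^ Suc n) j = (par ^^ n) (par j)"
  by (simp add: funpow_Suc_right del: funpow.simps)

lemma funpow_par_range: "j \<in> {0..I} \<Longrightarrow> (par ^^ n) j \<in> {0..I}"
proof (induction n)
  case (Suc n)
  thus ?case
    using par_agent[of "(par ^^ n) j"] by (cases "(par ^^ n) j = 0") (auto simp: par_0)
qed simp

lemma funpow_par_stays_0: "(par ^^ m) j = 0 \<Longrightarrow> m \<le> n \<Longrightarrow> (par ^^ n) j = 0"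
  by (metis funpow_add funpow_par_0 le_add_diff_inverse2 o_apply)

lemma uniform_depth: "\<exists>L\<ge>1. \<forall>j\<in>{1..I}. (par ^^ L) j = 0"
proof -
  have "\<forall>j\<in>{1..I}. \<exists>n. (par ^^ n) j = 0" using reaches_planner by blast
  then obtain d where d: "\<forall>j\<in>{1..I}. (par ^^ d j) j = 0" by (rule bchoice[THEN exE])
  define L where "L = Suc (\<Sum>k\<in>{1..I}. d k)"
  have "(par ^^ L) j = 0" if j: "j \<in> {1..I}" for j
  proof (rule funpow_par_stays_0)
    show "(par ^^ d j) j = 0" using d j by blast
    have "d j \<le> (\<Sum>k\<in>{1..I}. d k)" by (rule member_le_sum) (use j in auto)
    thus "d j \<le> L" unfolding L_def by simp
  qed
  moreover have "1 \<le> L" unfolding L_def by simp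
  ultimately show ?thesis by blast
qed

lemma exists_seed: assumes "1 \<le> I" shows "\<exists>s\<in>{1..I}. par s = 0"
proof -
  define m where "m = (LEAST n. (par ^^ n) 1 = 0)"
  have m: "(par ^^ m) 1 = 0"
    unfolding m_def using reaches_planner[of 1] assms by (auto intro: LeastI_ex)
  then obtain k where k: "m = Suc k" by (cases m) auto
  hence "(par ^^ k) 1 \<noteq> 0" unfolding m_def by (intro not_less_Least) simp
  moreover have "(par ^^ k) 1 \<in> {0..I}" using funpow_par_range assms by auto
  moreover have "par ((par ^^ k) 1) = 0" using m k by simp
  ultimately show ?thesis by auto
qed

lemma not_ancestor_of_parent:
  assumes j: "j \<in> {1..I}"
  shows "(par ^^ n) (par j) \<noteq> j"
proof
  assume "(par ^^ n) (par j) = j"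
  hence cycle: "(par ^^ Suc n) j = j" by (simp only: funpow_par_Suc)
  have "(par ^^ (k * Suc n)) j = j" for k
  proof (induction k)
    case (Suc k)
    have "(par ^^ (Suc n + k * Suc n)) j = j" by (simp only: funpow_add o_apply Suc cycle)
    thus ?case by (simp add: algebra_simps)
  qed simp
  moreover obtain m where "(par ^^ m) j = 0" using reaches_planner j by blast
  ultimately have "j = 0" using funpow_par_stays_0[of m j "m * Suc n"] by simp
  thus False using j by simp
qed

lemma recv_outside: "k \<notin> {1..I} \<Longrightarrow> \<not> recv I par a k"
  unfolding recv_def by blast

lemma recv_arc: "recv I par a k \<Longrightarrow> a k"
  unfolding recv_def by (metis atLeastAtMost_iff funpow_0 not_one_le_zero)

lemma recv_no_loss: "k \<in> {1..I} \<Longrightarrow> recv I par (no_loss I) k"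
  unfolding recv_def no_loss_def using funpow_par_range[of k] by fastforce

lemma recv_all_iff_no_loss:
  assumes "a \<in> arcs I"
  shows "(\<forall>k\<in>{1..I}. recv I par a k) \<longleftrightarrow> a = no_loss I"
proof
  assume "\<forall>k\<in>{1..I}. recv I par a k"
  thus "a = no_loss I" using assms recv_arc by (fastforce simp: arcs_def no_loss_def fun_eq_iff)
qed (use recv_no_loss in blast)

lemma recv_seed: "j \<in> {1..I} \<Longrightarrow> par j = 0 \<Longrightarrow> recv I par a j \<longleftrightarrow> a j"
proof -
  assume j: "j \<in> {1..I}" "par j = 0"
  hence "(par ^^ n) j \<noteq> 0 \<longleftrightarrow> n = 0" for n
    using funpow_par_Suc[of _ j] funpow_par_0 by (cases n) auto
  thus ?thesis using j unfolding recv_def by auto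
qed

lemma recv_child:
  assumes j: "j \<in> {1..I}" and i: "par j = i" "i \<noteq> 0"
  shows "i \<in> {1..I}" and "recv I par a j \<longleftrightarrow> recv I par a i \<and> a j"
proof -
  show i_agent: "i \<in> {1..I}" using par_agent[OF j] i by auto
  have "(\<forall>n. (par ^^ n) j \<noteq> 0 \<longrightarrow> a ((par ^^ n) j)) \<longleftrightarrow>
        a j \<and> (\<forall>n. (par ^^ Suc n) j \<noteq> 0 \<longrightarrow> a ((par ^^ Suc n) j))"
    using j by (metis funpow_0 not0_implies_Suc atLeastAtMost_iff not_one_le_zero)
  thus "recv I par a j \<longleftrightarrow> recv I par a i \<and> a j"
    unfolding recv_def funpow_par_Suc i(1) using j i_agent by auto
qed

lemma recv_parent_indep_arc:
  "j \<in> {1..I} \<Longrightarrow> recv I par (a(j := b)) (par j) \<longleftrightarrow> recv I par a (par j)"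
  unfolding recv_def using not_ancestor_of_parent by auto

end

section \<open>The thresholds\<close>

lemma mult_lt_1:
  fixes x y :: real
  assumes "0 \<le> x" "x < 1" "0 \<le> y" "y \<le> 1"
  shows "x * y < 1"
  using mult_left_mono[of y 1 x] assms by simp

lemma q1_strict_mono:
  fixes \<rho> e e' :: real
  assumes "0 < \<rho>" "\<rho> < 1" "0 < e" "e < e'" "e' < 1"
  shows "q1 \<rho> e < q1 \<rho> e'"
proof -
  have "0 < 1 - \<rho> * (1 - e)" "0 < 1 - \<rho> * (1 - e')"
    using assms mult_lt_1[of \<rho> "1 - e"] mult_lt_1[of \<rho> "1 - e'"] by simp_all
  moreover have "\<rho> * e' * (1 - \<rho> * (1 - e)) - \<rho> * e * (1 - \<rho> * (1 - e')) = \<rho> * (1 - \<rho>) * (e' - e)"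
    by (simp add: algebra_simps)
  moreover have "\<rho> * (1 - \<rho>) * (e' - e) > 0" using assms by simp
  ultimately show ?thesis unfolding q1_def by (simp add: divide_simps)
qed

lemma q2_antimono: "0 \<le> e \<Longrightarrow> e \<le> e' \<Longrightarrow> e' \<le> 1 \<Longrightarrow> q2 I e' \<le> q2 I e"
  unfolding q2_def by (intro power_mono) auto

text \<open>For an agent receiving with probability \<open>r\<close>, the posterior of \<open>G\<close> when uninformed is
\<open>\<rho>(1 - r)/(1 - \<rho> r)\<close>; when her parent receives with probability \<open>r\<close>, the denominator
\<open>1 - \<rho>(1 - \<epsilon>) r\<close> is the probability that she is uninformed and \<open>\<rho> \<epsilon> r\<close> that of her parent being
informed while she is not.\<close>

lemma q1_le_silent_posterior:
  fixes \<rho> \<epsilon> r :: real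
  assumes "0 < \<rho>" "\<rho> < 1" "0 < \<epsilon>" "0 \<le> r" "r \<le> 1 - \<epsilon>"
  shows "q1 \<rho> \<epsilon> \<le> \<rho> * (1 - r) / (1 - \<rho> * r)"
proof -
  have "0 < 1 - \<rho> * (1 - \<epsilon>)" "0 < 1 - \<rho> * r"
    using assms mult_lt_1[of \<rho> "1 - \<epsilon>"] mult_lt_1[of \<rho> r] by simp_all
  moreover have "\<rho> * (1 - r) * (1 - \<rho> * (1 - \<epsilon>)) - \<rho> * \<epsilon> * (1 - \<rho> * r) = \<rho> * (1 - \<rho>) * (1 - \<epsilon> - r)"
    by (simp add: algebra_simps)
  moreover have "\<rho> * (1 - \<rho>) * (1 - \<epsilon> - r) \<ge> 0" using assms by simp
  ultimately show ?thesis unfolding q1_def by (simp add: divide_simps)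
qed

lemma silent_posterior_le_q1:
  fixes \<rho> \<epsilon> r x :: real
  assumes "0 < \<rho>" "\<rho> < 1" "0 < \<epsilon>" "\<epsilon> < 1" "0 \<le> r" "r \<le> 1" "x \<le> \<rho> * \<epsilon> * r"
  shows "x / (1 - \<rho> * (1 - \<epsilon>) * r) \<le> q1 \<rho> \<epsilon>"
proof -
  have "(1 - \<epsilon>) * r \<le> 1" using assms by (intro mult_le_one) auto
  hence pos: "0 < 1 - \<rho> * (1 - \<epsilon>) * r" "0 < 1 - \<rho> * (1 - \<epsilon>)"
    using assms mult_lt_1[of \<rho> "(1 - \<epsilon>) * r"] mult_lt_1[of \<rho> "1 - \<epsilon>"] by (simp_all add: mult.assoc)
  have "x * (1 - \<rho> * (1 - \<epsilon>)) \<le> \<rho> * \<epsilon> * r * (1 - \<rho> * (1 - \<epsilon>))"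
    using assms pos by (intro mult_right_mono) auto
  also have "\<dots> = \<rho> * \<epsilon> * (1 - \<rho> * (1 - \<epsilon>) * r) - \<rho> * \<epsilon> * (1 - r)"
    by (simp add: algebra_simps)
  also have "\<dots> \<le> \<rho> * \<epsilon> * (1 - \<rho> * (1 - \<epsilon>) * r)"
    using assms by simp
  finally show ?thesis unfolding q1_def using pos by (simp add: divide_simps)
qed

section \<open>Posterior beliefs\<close>

definition Yev :: "nat \<Rightarrow> nat \<Rightarrow> (bool \<times> (nat \<Rightarrow> bool)) set" where
  "Yev I j = {\<omega>\<in>Omega I. snd \<omega> j}"

definition Nev :: "nat \<Rightarrow> nat \<Rightarrow> (bool \<times> (nat \<Rightarrow> bool)) set" where
  "Nev I j = {\<omega>\<in>Omega I. \<not> snd \<omega> j}"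

lemma info_cell_eq: "info_cell I j \<omega> = (if snd \<omega> j then Yev I j else Nev I j)"
  by (auto simp: info_cell_def Yev_def Nev_def)

locale info_tree_model = info_tree I par + lossy_arcs I \<epsilon> for I par \<epsilon> +
  fixes \<rho> :: real
  assumes prior_pos: "0 < \<rho>" and prior_lt_1: "\<rho> < 1" and agents_nonempty: "1 \<le> I"
begin

abbreviation P :: "(bool \<times> (nat \<Rightarrow> bool)) set \<Rightarrow> real" where
  "P \<equiv> Pr I par \<rho> \<epsilon>"

abbreviation Bel :: "real \<Rightarrow> (bool \<times> (nat \<Rightarrow> bool)) set \<Rightarrow> (bool \<times> (nat \<Rightarrow> bool)) set" where
  "Bel p \<equiv> belief I par \<rho> \<epsilon> p"

abbreviation recv_prob :: "nat \<Rightarrow> real" where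
  "recv_prob j \<equiv> arcs_prob I \<epsilon> {a. recv I par a j}"

lemma Pr_eq_arcs_prob:
  "P E = \<rho> * arcs_prob I \<epsilon> {a. (True, recv I par a) \<in> E}
     + (1 - \<rho>) * (if (False, \<lambda>_. False) \<in> E then 1 else 0)"
proof -
  have "(\<Sum>a\<in>arcs I. arc_weight I \<epsilon> a * (if (True, recv I par a) \<in> E then 1 else 0))
      = (\<Sum>a\<in>arcs I. if a \<in> {a. (True, recv I par a) \<in> E} then arc_weight I \<epsilon> a else 0)"
    by (rule sum.cong) auto
  also have "\<dots> = arcs_prob I \<epsilon> {a. (True, recv I par a) \<in> E}"
    unfolding arcs_prob_def by (rule sum.inter_restrict[OF finite_arcs, symmetric])
  finally show ?thesis unfolding Pr_def by simp
qed

lemma good_state_in_Omega: "(True, recv I par a) \<in> Omega I"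
  using recv_outside by (auto simp: Omega_def)

lemma Pr_nonneg: "P E \<ge> 0"
  unfolding Pr_eq_arcs_prob using arcs_prob_nonneg prior_pos prior_lt_1
  by (auto intro!: add_nonneg_nonneg)

lemma Pr_mono: "E \<subseteq> F \<Longrightarrow> P E \<le> P F"
  unfolding Pr_eq_arcs_prob using prior_pos prior_lt_1
  by (intro add_mono mult_left_mono arcs_prob_mono) auto

lemma Pr_empty: "P {} = 0"
  unfolding Pr_eq_arcs_prob by (simp add: arcs_prob_def)

lemma Pr_Yev: "P (Yev I j) = \<rho> * recv_prob j"
  and Pr_Gev_Yev: "P (Gev I \<inter> Yev I j) = \<rho> * recv_prob j"
  unfolding Pr_eq_arcs_prob Yev_def Gev_def using good_state_in_Omega by auto

lemma Pr_Nev: "P (Nev I j) = 1 - \<rho> * recv_prob j"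
proof -
  have "{a. (True, recv I par a) \<in> Nev I j} = - {a. recv I par a j}"
    unfolding Nev_def using good_state_in_Omega by auto
  moreover have "(False, \<lambda>_. False) \<in> Nev I j" by (simp add: Nev_def Omega_def)
  ultimately show ?thesis unfolding Pr_eq_arcs_prob by (simp add: arcs_prob_Compl algebra_simps)
qed

lemma Pr_Gev_Nev: "P (Gev I \<inter> Nev I j) = \<rho> * (1 - recv_prob j)"
proof -
  have "{a. (True, recv I par a) \<in> Gev I \<inter> Nev I j} = - {a. recv I par a j}"
    unfolding Nev_def Gev_def using good_state_in_Omega by auto
  moreover have "(False, \<lambda>_. False) \<notin> Gev I" by (simp add: Gev_def)
  ultimately show ?thesis unfolding Pr_eq_arcs_prob by (simp add: arcs_prob_Compl)
qed

lemma Pr_Yev_Nev: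
  "P (Yev I i \<inter> Nev I j) = \<rho> * arcs_prob I \<epsilon> {a. recv I par a i \<and> \<not> recv I par a j}"
proof -
  have "{a. (True, recv I par a) \<in> Yev I i \<inter> Nev I j} = {a. recv I par a i \<and> \<not> recv I par a j}"
    unfolding Yev_def Nev_def using good_state_in_Omega by auto
  thus ?thesis unfolding Pr_eq_arcs_prob by (simp add: Yev_def)
qed

lemma Pr_Ystar: "P (Ystar I) = \<rho> * (1 - \<epsilon>) ^ I"
proof -
  have "arcs I \<inter> {a. (True, recv I par a) \<in> Ystar I} = {no_loss I}"
    using recv_all_iff_no_loss no_loss_in_arcs good_state_in_Omega by (auto simp: Ystar_def)
  moreover have "(False, \<lambda>_. False) \<notin> Ystar I" using agents_nonempty by (auto simp: Ystar_def)
  ultimately show ?thesis unfolding Pr_eq_arcs_prob by (simp add: arcs_prob_subset_no_loss)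
qed

lemma recv_prob_ge: "j \<in> {1..I} \<Longrightarrow> (1 - \<epsilon>) ^ I \<le> recv_prob j"
  using recv_no_loss by (intro arcs_prob_no_loss_le) auto

lemma recv_prob_pos: "j \<in> {1..I} \<Longrightarrow> 0 < recv_prob j"
  using recv_prob_ge[of j] loss_lt_1 by (meson diff_gt_0_iff_gt less_le_trans zero_less_power)

lemma recv_prob_le: "j \<in> {1..I} \<Longrightarrow> recv_prob j \<le> 1 - \<epsilon>"
  using arcs_prob_mono[of "{a. recv I par a j}" "{a. a j}"] arcs_prob_arc[of j] recv_arc by auto

lemma recv_prob_seed: "j \<in> {1..I} \<Longrightarrow> par j = 0 \<Longrightarrow> recv_prob j = 1 - \<epsilon>"
  using recv_seed arcs_prob_arc[of j] by simp

lemma recv_prob_child: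
  assumes j: "j \<in> {1..I}" and i: "par j = i" "i \<noteq> 0"
  shows "recv_prob j = (1 - \<epsilon>) * recv_prob i"
    and "arcs_prob I \<epsilon> {a. recv I par a i \<and> \<not> recv I par a j} = \<epsilon> * recv_prob i"
proof -
  have recv_j: "{a. recv I par a j} = {a. recv I par a i} \<inter> {a. a j}"
    using recv_child(2)[OF j i] by auto
  show child: "recv_prob j = (1 - \<epsilon>) * recv_prob i"
    unfolding recv_j by (rule arcs_prob_indep_arc[OF j]) (use recv_parent_indep_arc[OF j] i in auto)
  have "{a. recv I par a i \<and> \<not> recv I par a j} = {a. recv I par a i} - {a. a j}"
    using recv_child(2)[OF j i] by auto
  thus "arcs_prob I \<epsilon> {a. recv I par a i \<and> \<not> recv I par a j} = \<epsilon> * recv_prob i"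
    using arcs_prob_split[of "{a. recv I par a i}" "{a. a j}"] child recv_j
    by (simp add: algebra_simps)
qed

lemma q1_lt_1: "q1 \<rho> \<epsilon> < 1"
proof -
  have "0 < 1 - \<rho> * (1 - \<epsilon>)"
    using prior_pos prior_lt_1 loss_pos loss_lt_1 mult_lt_1[of \<rho> "1 - \<epsilon>"] by simp
  moreover have "\<rho> * \<epsilon> < 1 - \<rho> * (1 - \<epsilon>)" using prior_lt_1 by (simp add: algebra_simps)
  ultimately show ?thesis unfolding q1_def by simp
qed

lemma q1_pos: "0 < q1 \<rho> \<epsilon>"
  unfolding q1_def using prior_pos prior_lt_1 loss_pos loss_lt_1 mult_lt_1[of \<rho> "1 - \<epsilon>"]
  by simp

lemma cond_Gev_Yev: "j \<in> {1..I} \<Longrightarrow> cond_Pr I par \<rho> \<epsilon> (Gev I) (Yev I j) = 1"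
  unfolding cond_Pr_def Pr_Gev_Yev Pr_Yev using recv_prob_pos[of j] prior_pos by simp

lemma cond_Gev_Nev_ge: "j \<in> {1..I} \<Longrightarrow> q1 \<rho> \<epsilon> \<le> cond_Pr I par \<rho> \<epsilon> (Gev I) (Nev I j)"
  unfolding cond_Pr_def Pr_Gev_Nev Pr_Nev
  using q1_le_silent_posterior prior_pos prior_lt_1 loss_pos recv_prob_pos recv_prob_le
  by (simp add: less_imp_le)

lemma cond_Gev_Nev_seed:
  "j \<in> {1..I} \<Longrightarrow> par j = 0 \<Longrightarrow> cond_Pr I par \<rho> \<epsilon> (Gev I) (Nev I j) = q1 \<rho> \<epsilon>"
  unfolding cond_Pr_def Pr_Gev_Nev Pr_Nev q1_def by (simp add: recv_prob_seed)

lemma cond_Omega: "j \<in> {1..I} \<Longrightarrow> cond_Pr I par \<rho> \<epsilon> (Omega I) (info_cell I j \<omega>) = 1"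
proof -
  assume j: "j \<in> {1..I}"
  have "0 < P (Yev I j)" "0 < P (Nev I j)"
    unfolding Pr_Yev Pr_Nev using recv_prob_pos[OF j] recv_prob_le[OF j] prior_pos prior_lt_1 loss_pos
    using mult_lt_1[of \<rho> "recv_prob j"] by auto
  moreover have "Omega I \<inter> info_cell I j \<omega> = info_cell I j \<omega>" by (auto simp: info_cell_def)
  ultimately show ?thesis unfolding cond_Pr_def info_cell_eq by simp
qed

lemma cond_Ystar_Yev:
  assumes "j \<in> {1..I}"
  shows "cond_Pr I par \<rho> \<epsilon> (Ystar I) (Yev I j) = (1 - \<epsilon>) ^ I / recv_prob j"
proof -
  have "Ystar I \<inter> Yev I j = Ystar I" using assms by (auto simp: Ystar_def Yev_def)
  thus ?thesis
    unfolding cond_Pr_def Pr_Yev using prior_pos by (simp add: Pr_Ystar)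
qed

lemma cond_Ystar_Nev: "j \<in> {1..I} \<Longrightarrow> cond_Pr I par \<rho> \<epsilon> (Ystar I) (Nev I j) = 0"
proof -
  assume "j \<in> {1..I}"
  hence "Ystar I \<inter> Nev I j = {}" by (auto simp: Ystar_def Nev_def)
  thus ?thesis unfolding cond_Pr_def by (simp add: Pr_empty)
qed

lemma cond_Ystar_Yev_ge_q2: "j \<in> {1..I} \<Longrightarrow> q2 I \<epsilon> \<le> cond_Pr I par \<rho> \<epsilon> (Ystar I) (Yev I j)"
proof -
  assume j: "j \<in> {1..I}"
  have "(1 - \<epsilon>) ^ I = (1 - \<epsilon>) * (1 - \<epsilon>) ^ (I - 1)"
    using agents_nonempty by (simp add: power_eq_if)
  also have "\<dots> \<ge> recv_prob j * (1 - \<epsilon>) ^ (I - 1)"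
    using recv_prob_le[OF j] loss_lt_1 by (intro mult_right_mono) auto
  finally show ?thesis
    unfolding cond_Ystar_Yev[OF j] q2_def using recv_prob_pos[OF j] by (simp add: pos_le_divide_eq mult.commute)
qed

lemma cond_Ystar_Yev_seed:
  "j \<in> {1..I} \<Longrightarrow> par j = 0 \<Longrightarrow> cond_Pr I par \<rho> \<epsilon> (Ystar I) (Yev I j) = q2 I \<epsilon>"
  unfolding cond_Ystar_Yev q2_def using agents_nonempty loss_lt_1
  by (simp add: recv_prob_seed power_eq_if)

section \<open>Iterated \<open>p\<close>-belief\<close>

lemma belief_subset_Omega: "Bel p D \<subseteq> Omega I"
  unfolding belief_def by auto

lemma subset_beliefI:
  assumes "X \<subseteq> Omega I"
    and "\<And>\<omega> j. \<omega> \<in> X \<Longrightarrow> j \<in> {1..I} \<Longrightarrow> p \<le> cond_Pr I par \<rho> \<epsilon> D (info_cell I j \<omega>)"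
  shows "X \<subseteq> Bel p D"
  using assms unfolding belief_def belief_i_def by auto

lemma belief_mono: "D \<subseteq> D' \<Longrightarrow> Bel p D \<subseteq> Bel p D'"
proof -
  assume "D \<subseteq> D'"
  hence "cond_Pr I par \<rho> \<epsilon> D F \<le> cond_Pr I par \<rho> \<epsilon> D' F" for F
    unfolding cond_Pr_def using Pr_nonneg by (intro divide_right_mono Pr_mono) auto
  thus ?thesis unfolding belief_def belief_i_def by (auto intro: order_trans)
qed

lemma belief_subset_Yev:
  assumes "j \<in> {1..I}" "cond_Pr I par \<rho> \<epsilon> D (Nev I j) < p"
  shows "Bel p D \<subseteq> Yev I j"
proof
  fix \<omega> assume "\<omega> \<in> Bel p D"
  hence "\<omega> \<in> Omega I" "p \<le> cond_Pr I par \<rho> \<epsilon> D (info_cell I j \<omega>)"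
    using assms(1) unfolding belief_def belief_i_def by auto
  thus "\<omega> \<in> Yev I j" using assms(2) unfolding info_cell_eq by (auto simp: Yev_def split: if_splits)
qed

lemma common_belief_subset_iterate: "1 \<le> l \<Longrightarrow> common_belief I par \<rho> \<epsilon> p E \<subseteq> (Bel p ^^ l) E"
  unfolding common_belief_def by auto

lemma evident_subset_common_belief:
  assumes "X \<subseteq> Bel p E" and "X \<subseteq> Bel p X"
  shows "X \<subseteq> common_belief I par \<rho> \<epsilon> p E"
proof -
  have "X \<subseteq> (Bel p ^^ Suc l) E" for l
  proof (induction l)
    case (Suc l)
    thus ?case using assms(2) belief_mono[OF Suc, of p] by simp
  qed (simp add: assms(1))
  hence "X \<subseteq> (Bel p ^^ l) E" if "1 \<le> l" for l
    using that by (metis Suc_diff_1 less_eq_Suc_le Suc_le_eq One_nat_def)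
  thus ?thesis unfolding common_belief_def by auto
qed

section \<open>The three regimes\<close>

lemma common_belief_Gev_low:
  assumes "p \<le> q1 \<rho> \<epsilon>"
  shows "common_belief I par \<rho> \<epsilon> p (Gev I) = Omega I"
proof
  show "Omega I \<subseteq> common_belief I par \<rho> \<epsilon> p (Gev I)"
  proof (rule evident_subset_common_belief)
    show "Omega I \<subseteq> Bel p (Gev I)"
      by (rule subset_beliefI)
         (use assms cond_Gev_Yev cond_Gev_Nev_ge q1_lt_1 in \<open>auto simp: info_cell_eq intro: order_trans\<close>)
    show "Omega I \<subseteq> Bel p (Omega I)"
      by (rule subset_beliefI) (use assms cond_Omega q1_lt_1 in auto)
  qed
  show "common_belief I par \<rho> \<epsilon> p (Gev I) \<subseteq> Omega I"
    using common_belief_subset_iterate[of 1 p "Gev I"] belief_subset_Omega by auto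
qed

text \<open>For \<open>p > q\<^sub>1\<close>, the \<open>l\<close>-th iterated belief only contains states in which every agent within
distance \<open>l\<close> of the planner is informed: an uninformed seed gives \<open>G\<close> posterior \<open>q\<^sub>1\<close>, and an
uninformed agent whose parent is known to be informed gives it at most \<open>q\<^sub>1\<close>.\<close>

lemma iterated_belief_subset_Yev:
  assumes p: "q1 \<rho> \<epsilon> < p" and l: "1 \<le> l"
  shows "j \<in> {1..I} \<Longrightarrow> (par ^^ l) j = 0 \<Longrightarrow> (Bel p ^^ l) (Gev I) \<subseteq> Yev I j"
  using l
proof (induction l arbitrary: j rule: dec_induct)
  case base
  thus ?case using belief_subset_Yev cond_Gev_Nev_seed p by simp
next
  case (step l)
  let ?D = "(Bel p ^^ l) (Gev I)"
  have "cond_Pr I par \<rho> \<epsilon> ?D (Nev I j) < p"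
  proof (cases "par j = 0")
    case True
    hence "?D \<subseteq> Yev I j"
      using step funpow_par_stays_0[of "Suc 0" j l] by simp
    hence "?D \<inter> Nev I j = {}" by (auto simp: Yev_def Nev_def)
    thus ?thesis unfolding cond_Pr_def using Pr_empty p q1_pos by simp
  next
    case False
    define i where "i = par j"
    have i: "i \<in> {1..I}" "i \<noteq> 0" using recv_child(1)[OF step.prems(1) i_def[symmetric]] False i_def by auto
    have "?D \<subseteq> Yev I i"
      using step.IH[OF i(1)] step.prems(2) unfolding i_def by (simp only: funpow_par_Suc)
    hence "P (?D \<inter> Nev I j) \<le> \<rho> * \<epsilon> * recv_prob i"
      using Pr_mono[of "?D \<inter> Nev I j" "Yev I i \<inter> Nev I j"] Pr_Yev_Nev[of i j]
        recv_prob_child(2)[OF step.prems(1) i_def[symmetric] i(2)] by (auto simp: mult.assoc)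
    hence "cond_Pr I par \<rho> \<epsilon> ?D (Nev I j) \<le> q1 \<rho> \<epsilon>"
      unfolding cond_Pr_def Pr_Nev recv_prob_child(1)[OF step.prems(1) i_def[symmetric] i(2)]
      using silent_posterior_le_q1 prior_pos prior_lt_1 loss_pos loss_lt_1
        recv_prob_pos[OF i(1)] recv_prob_le[OF i(1)]
      by (simp add: mult.assoc mult.left_commute)
    thus ?thesis using p by simp
  qed
  thus ?case using belief_subset_Yev[OF step.prems(1)] by simp
qed

lemma iterated_belief_subset_Ystar:
  assumes "q1 \<rho> \<epsilon> < p"
  obtains L where "1 \<le> L" "(Bel p ^^ L) (Gev I) \<subseteq> Ystar I"
proof -
  obtain L where L: "1 \<le> L" "\<forall>j\<in>{1..I}. (par ^^ L) j = 0" using uniform_depth by blast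
  have "(Bel p ^^ L) (Gev I) \<subseteq> Omega I"
    using L(1) belief_subset_Omega by (cases L) auto
  moreover have "(Bel p ^^ L) (Gev I) \<subseteq> Yev I j" if "j \<in> {1..I}" for j
    using iterated_belief_subset_Yev[OF assms L(1) that] L(2) that by simp
  ultimately have "(Bel p ^^ L) (Gev I) \<subseteq> Ystar I"
    unfolding Ystar_def Yev_def by blast
  thus thesis using L(1) that by blast
qed

lemma common_belief_Gev_mid:
  assumes "q1 \<rho> \<epsilon> < p" "p \<le> q2 I \<epsilon>"
  shows "common_belief I par \<rho> \<epsilon> p (Gev I) = Ystar I"
proof
  obtain L where "1 \<le> L" "(Bel p ^^ L) (Gev I) \<subseteq> Ystar I"
    using iterated_belief_subset_Ystar[OF assms(1)] .
  thus "common_belief I par \<rho> \<epsilon> p (Gev I) \<subseteq> Ystar I"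
    using common_belief_subset_iterate by blast
  have "q2 I \<epsilon> \<le> 1" unfolding q2_def using loss_pos loss_lt_1 by (simp add: power_le_one)
  show "Ystar I \<subseteq> common_belief I par \<rho> \<epsilon> p (Gev I)"
  proof (rule evident_subset_common_belief)
    show "Ystar I \<subseteq> Bel p (Gev I)"
      by (rule subset_beliefI)
         (use assms \<open>q2 I \<epsilon> \<le> 1\<close> cond_Gev_Yev in \<open>auto simp: Ystar_def info_cell_eq\<close>)
    show "Ystar I \<subseteq> Bel p (Ystar I)"
      by (rule subset_beliefI)
         (use assms cond_Ystar_Yev_ge_q2 in \<open>auto simp: Ystar_def info_cell_eq intro: order_trans\<close>)
  qed
qed

text \<open>For \<open>p > q\<^sub>2\<close> an informed seed already doubts \<open>Y\<^sup>*\<close>.\<close>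

lemma belief_Ystar_high: "q2 I \<epsilon> < p \<Longrightarrow> Bel p (Ystar I) = {}"
proof (rule equals0I)
  fix \<omega> assume p: "q2 I \<epsilon> < p" and \<omega>: "\<omega> \<in> Bel p (Ystar I)"
  obtain s where s: "s \<in> {1..I}" "par s = 0" using exists_seed agents_nonempty by blast
  have "p \<le> cond_Pr I par \<rho> \<epsilon> (Ystar I) (info_cell I s \<omega>)"
    using \<omega> s(1) unfolding belief_def belief_i_def by blast
  moreover have "0 < q2 I \<epsilon>" unfolding q2_def using loss_lt_1 by simp
  ultimately show False
    unfolding info_cell_eq using p cond_Ystar_Yev_seed[OF s] cond_Ystar_Nev[OF s(1)]
    by (simp split: if_splits)
qed

lemma common_belief_Gev_high:
  assumes "q1 \<rho> \<epsilon> < p" "q2 I \<epsilon> < p"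
  shows "common_belief I par \<rho> \<epsilon> p (Gev I) = {}"
proof -
  obtain L where "1 \<le> L" "(Bel p ^^ L) (Gev I) \<subseteq> Ystar I"
    using iterated_belief_subset_Ystar[OF assms(1)] .
  hence "(Bel p ^^ Suc L) (Gev I) = {}"
    using belief_mono[of "(Bel p ^^ L) (Gev I)" "Ystar I" p] belief_Ystar_high[OF assms(2)] by simp
  thus ?thesis using common_belief_subset_iterate[of "Suc L" p "Gev I"] by simp
qed

end

theorem proposition1:
  fixes I :: nat and \<rho> \<epsilon> \<epsilon>bar p :: real and par :: "nat \<Rightarrow> nat"
  assumes "I \<ge> 2" and "0 < \<rho>" and "\<rho> < 1"
    and "0 < \<epsilon>bar" and "\<epsilon>bar < 1" and "q1 \<rho> \<epsilon>bar = q2 I \<epsilon>bar"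
    and "\<forall>e. 0 < e \<and> e < 1 \<and> q1 \<rho> e = q2 I e \<longrightarrow> e = \<epsilon>bar"
    and "0 < \<epsilon>" and "\<epsilon> < \<epsilon>bar"
    and "is_info_tree I par"
  shows "(p \<le> q1 \<rho> \<epsilon> \<longrightarrow> common_belief I par \<rho> \<epsilon> p (Gev I) = Omega I)
       \<and> (q1 \<rho> \<epsilon> < p \<and> p \<le> q2 I \<epsilon> \<longrightarrow> common_belief I par \<rho> \<epsilon> p (Gev I) = Ystar I)
       \<and> (q2 I \<epsilon> < p \<longrightarrow> common_belief I par \<rho> \<epsilon> p (Gev I) = {})"
proof -
  interpret info_tree_model I par \<epsilon> \<rho>
    by unfold_locales (use assms in auto)
  have "q1 \<rho> \<epsilon> < q1 \<rho> \<epsilon>bar" using assms by (intro q1_strict_mono) auto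
  also have "\<dots> = q2 I \<epsilon>bar" by (rule assms(6))
  also have "\<dots> \<le> q2 I \<epsilon>" using assms by (intro q2_antimono) auto
  finally have "q1 \<rho> \<epsilon> < q2 I \<epsilon>" .
  thus ?thesis
    using common_belief_Gev_low common_belief_Gev_mid common_belief_Gev_high[of p]
    by (simp add: not_le)
qed

end
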